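(* Let $n=p_1^{a_1}p_2^{a_2}\cdots p_r^{a_r}$ be the prime factorization of an integer $n$, with distinct primes $p_i$ and exponents $a_i\ge 3$ for all $i$, and suppose $n$ is $k$-multiplicatively $e$-perfect for an integer $k\ge 2$, i.e. $T_e(n)=n^k$. Then $$2^{r-1}<k<\prod_{i=1}^r\left(a_i^{\,0.5+\frac{C(r-1)}{\log\log a_i}}\right)^{1/r},$$ where $C=C_1\log 2$ and $C_1=1.5379\ldots$.
   Context: $d(m)$ denotes the number of positive divisors of $m$. For $n=p_1^{a_1}\cdots p_r^{a_r}>1$, a divisor $d=p_1^{b_1}\cdots p_r^{b_r}$ of $n$ is an exponential divisor ($e$-divisor) if $b_i\mid a_i$ for all $i$; $T_e(n)$ denotes the product of all $e$-divisors of $n$. The constant $C_1=1.5379\ldots$ is the Nicolas–Robin constant: the best constant such that $\frac{\log d(m)}{\log 2}\le C_1\frac{\log m}{\log\log m}$ for all $m\ge 3$, with equality at $m=2^5\cdot3^3\cdot5^2\cdot7\cdot11\cdot13\cdot17\cdot19$. Logarithms are natural. *)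

theory Defs
  imports "HOL-Computational_Algebra.Primes" Complex_Main
begin

definition num_divisors :: "nat \<Rightarrow> nat" where
  "num_divisors m = card {d. d dvd m}"

definition e_divisor :: "nat \<Rightarrow> nat \<Rightarrow> bool" where
  "e_divisor d n \<longleftrightarrow> d dvd n \<and>
     (\<forall>p\<in>prime_factors n. multiplicity p d dvd multiplicity p n)"

definition T_e :: "nat \<Rightarrow> nat" where
  "T_e n = \<Prod>{d. e_divisor d n}"

text \<open>Nicolas--Robin constant: the best constant C1 with
  log d(m) / log 2 \<le> C1 * log m / log log m for all m \<ge> 3.\<close>
definition C1 :: real where
  "C1 = Sup {(ln (real (num_divisors m)) / ln 2) * ln (ln (real m)) / ln (real m) | m. m \<ge> 3}"

end

theory Submission
  imports Defs "HOL-Analysis.Complex_Transcendental"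
begin

text \<open>Write \<open>n = \<Prod>p. p ^ a_p\<close> with \<open>r\<close> prime factors. The \<open>e\<close>-divisors of \<open>n\<close> correspond to
  tuples \<open>(b_p)\<close> with \<open>b_p\<close> dividing \<open>a_p\<close>, so the exponent of \<open>p\<close> in \<open>T_e(n)\<close> is
  \<open>\<sigma>(a_p)\<close> times the product of the \<open>d(a_q)\<close> over \<open>q \<noteq> p\<close>, and \<open>T_e(n) = n^k\<close> says
  \<open>k a_p = \<sigma>(a_p) \<Prod>q\<noteq>p. d(a_q)\<close>. Since \<open>\<sigma>(a) > a\<close> and \<open>d(a) \<ge> 2\<close>, a single such identity
  gives \<open>k > 2^(r-1)\<close>. Multiplying all \<open>r\<close> of them gives \<open>k^r \<Prod>p. a_p = \<Prod>p. \<sigma>(a_p) d(a_p)^(r-1)\<close>,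
  and the upper bound follows from \<open>\<sigma>(a)^2 < a^3\<close> for \<open>a \<ge> 3\<close> together with
  \<open>d(a) \<le> a powr (C1 log 2 / log log a)\<close>, which is what the definition of \<open>C1\<close> says.\<close>

section \<open>Divisors as exponent vectors\<close>

definition divisor_sum :: "nat \<Rightarrow> nat" where
  "divisor_sum m = \<Sum>{d. d dvd m}"

lemma num_divisors_ge_2: "a \<ge> 2 \<Longrightarrow> num_divisors a \<ge> 2"
  unfolding num_divisors_def
  by (rule order.trans[OF _ card_mono[of _ "{1, a}"]]) auto

lemma divisor_sum_ge: "a \<ge> 2 \<Longrightarrow> divisor_sum a \<ge> a + 1"
  unfolding divisor_sum_def
  by (rule order.trans[OF _ sum_mono2[of _ "{1, a}"]]) auto

lemma prime_factors_nonempty: "n > (1::nat) \<Longrightarrow> prime_factors n \<noteq> {}"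
  using prime_factorization_nat[of n] by auto

definition prime_power_prod :: "nat set \<Rightarrow> (nat \<Rightarrow> nat) \<Rightarrow> nat" where
  "prime_power_prod P f = (\<Prod>q\<in>P. q ^ f q)"

lemma multiplicity_prime_power_prod:
  assumes "m > 0" "prime p"
  shows "multiplicity p (prime_power_prod (prime_factors m) f) =
           (if p \<in> prime_factors m then f p else 0)"
  unfolding prime_power_prod_def
  by (rule multiplicity_prod_prime_powers) (use assms in auto)

lemma prime_power_prod_pos: "m > 0 \<Longrightarrow> prime_power_prod (prime_factors m) f > 0"
  unfolding prime_power_prod_def
  by (rule prod_pos) (metis in_prime_factors_imp_prime prime_gt_0_nat zero_less_power)

text \<open>With \<open>S q = {..multiplicity q m}\<close> this enumerates all divisors of \<open>m\<close>, with
  \<open>S q = {b. b dvd multiplicity q m}\<close> the exponential divisors.\<close>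
lemma bij_betw_exponent_vectors_divisors:
  fixes m :: nat
  assumes m: "m > 0" and S: "\<And>q. q \<in> prime_factors m \<Longrightarrow> S q \<subseteq> {..multiplicity q m}"
  shows "bij_betw (prime_power_prod (prime_factors m)) (PiE (prime_factors m) S)
           {d. d dvd m \<and> (\<forall>q\<in>prime_factors m. multiplicity q d \<in> S q)}"
proof -
  let ?P = "prime_factors m" and ?\<pi> = "prime_power_prod (prime_factors m)"
  have exponent: "multiplicity q (?\<pi> f) = f q" if "q \<in> ?P" for q f
    using multiplicity_prime_power_prod[OF m, of q f] that by auto
  show ?thesis
  proof (rule bij_betw_byWitness[where f' = "\<lambda>d. restrict (\<lambda>q. multiplicity q d) ?P"])
    show "\<forall>f\<in>PiE ?P S. restrict (\<lambda>q. multiplicity q (?\<pi> f)) ?P = f"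
      by (auto simp: exponent PiE_iff intro!: ext)
    show "\<forall>d\<in>{d. d dvd m \<and> (\<forall>q\<in>?P. multiplicity q d \<in> S q)}.
            ?\<pi> (restrict (\<lambda>q. multiplicity q d) ?P) = d"
    proof safe
      fix d assume "d dvd m"
      then have "d > 0" "prime_factors d \<subseteq> ?P"
        using m by (auto intro: Nat.gr0I dvd_trans simp: prime_factors_dvd)
      then have "d = (\<Prod>q\<in>prime_factors d. q ^ multiplicity q d)"
        using prime_factorization_nat by blast
      also have "\<dots> = (\<Prod>q\<in>?P. q ^ multiplicity q d)"
        by (rule prod.mono_neutral_left[OF finite_set_mset \<open>prime_factors d \<subseteq> ?P\<close>])
           (auto simp: prime_factors_multiplicity)
      finally show "?\<pi> (restrict (\<lambda>q. multiplicity q d) ?P) = d"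
        unfolding prime_power_prod_def by simp
    qed
    show "(\<lambda>d. restrict (\<lambda>q. multiplicity q d) ?P) `
            {d. d dvd m \<and> (\<forall>q\<in>?P. multiplicity q d \<in> S q)} \<subseteq> PiE ?P S"
      by auto
    show "?\<pi> ` PiE ?P S \<subseteq> {d. d dvd m \<and> (\<forall>q\<in>?P. multiplicity q d \<in> S q)}"
    proof (rule image_subsetI)
      fix f assume f: "f \<in> PiE ?P S"
      have "multiplicity p (?\<pi> f) \<le> multiplicity p m" if "prime p" for p
        using multiplicity_prime_power_prod[OF m that, of f] f S by (auto simp: PiE_iff)
      then have "?\<pi> f dvd m"
        using prime_power_prod_pos[OF m] by (intro multiplicity_le_imp_dvd) auto
      then show "?\<pi> f \<in> {d. d dvd m \<and> (\<forall>q\<in>?P. multiplicity q d \<in> S q)}"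
        using f exponent by (auto simp: PiE_iff)
    qed
  qed
qed

lemma bij_betw_exponent_vectors_all_divisors:
  fixes m :: nat
  assumes "m > 0"
  shows "bij_betw (prime_power_prod (prime_factors m))
           (PiE (prime_factors m) (\<lambda>q. {..multiplicity q m})) {d. d dvd m}"
proof -
  have "{d. d dvd m} = {d. d dvd m \<and> (\<forall>q\<in>prime_factors m. multiplicity q d \<in> {..multiplicity q m})}"
    using assms by (auto intro: dvd_imp_multiplicity_le)
  then show ?thesis
    using bij_betw_exponent_vectors_divisors[OF assms, of "\<lambda>q. {..multiplicity q m}"] by simp
qed

lemma num_divisors_eq_prod:
  "m > 0 \<Longrightarrow> num_divisors m = (\<Prod>q\<in>prime_factors m. multiplicity q m + 1)"
  unfolding num_divisors_def
  by (auto simp: card_PiE bij_betw_same_card[OF bij_betw_exponent_vectors_all_divisors, symmetric])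

lemma divisor_sum_eq_prod:
  assumes "m > 0"
  shows "divisor_sum m = (\<Prod>q\<in>prime_factors m. \<Sum>i\<le>multiplicity q m. q ^ i)"
proof -
  let ?P = "prime_factors m"
  have "divisor_sum m = (\<Sum>f\<in>PiE ?P (\<lambda>q. {..multiplicity q m}). prime_power_prod ?P f)"
    unfolding divisor_sum_def
    using sum.reindex_bij_betw[OF bij_betw_exponent_vectors_all_divisors[OF assms], of id] by simp
  also have "\<dots> = (\<Prod>q\<in>?P. \<Sum>i\<le>multiplicity q m. q ^ i)"
    unfolding prime_power_prod_def by (rule prod_sum_PiE[symmetric]) auto
  finally show ?thesis .
qed

lemma multiplicity_T_e:
  assumes n: "n > 0" and p: "p \<in> prime_factors n"
  shows "multiplicity p (T_e n) = divisor_sum (multiplicity p n) *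
           (\<Prod>q\<in>prime_factors n - {p}. num_divisors (multiplicity q n))"
proof -
  let ?P = "prime_factors n" and ?S = "\<lambda>q. {b. b dvd multiplicity q n}"
  let ?\<pi> = "prime_power_prod ?P"
  have S: "?S q \<subseteq> {..multiplicity q n}" "finite (?S q)" if "q \<in> ?P" for q
    using that by (auto simp: prime_factors_multiplicity intro: dvd_imp_le)
  have bij: "bij_betw ?\<pi> (PiE ?P ?S) {d. e_divisor d n}"
    unfolding e_divisor_def using bij_betw_exponent_vectors_divisors[OF n S(1)] by simp
  have fin: "finite (PiE ?P ?S)"
    using S(2) by (intro finite_PiE) auto
  have "multiplicity p (T_e n) = (\<Sum>d\<in>{d. e_divisor d n}. multiplicity p d)"
    unfolding T_e_def
  proof (rule prime_elem_multiplicity_prod_distrib[where f = id, simplified])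
    show "prime_elem p" using p by (auto intro: prime_imp_prime_elem)
    show "0 \<notin> {d. e_divisor d n}" using n by (auto simp: e_divisor_def)
    show "finite {d. e_divisor d n}" using bij_betw_finite[OF bij] fin by simp
  qed
  also have "\<dots> = (\<Sum>f\<in>PiE ?P ?S. multiplicity p (?\<pi> f))"
    using sum.reindex_bij_betw[OF bij, of "multiplicity p"] by simp
  \<comment> \<open>writing \<open>f p\<close> as a product over all primes lets the sum over \<open>PiE\<close> factor\<close>
  also have "\<dots> = (\<Sum>f\<in>PiE ?P ?S. \<Prod>q\<in>?P. if q = p then f q else 1)"
    using multiplicity_prime_power_prod[OF n in_prime_factors_imp_prime[OF p]] p
    by (simp add: prod.delta)
  also have "\<dots> = (\<Prod>q\<in>?P. \<Sum>b\<in>?S q. if q = p then b else 1)"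
    using S(2) by (intro prod_sum_PiE[symmetric]) auto
  also have "\<dots> = (\<Sum>b\<in>?S p. b) * (\<Prod>q\<in>?P - {p}. card (?S q))"
    using p by (subst prod.remove) (auto intro!: prod.cong)
  finally show ?thesis by (simp add: divisor_sum_def num_divisors_def)
qed

section \<open>The divisor sum satisfies \<open>\<sigma>(a)^2 < a^3\<close>\<close>

lemma geometric_sum_sq_ratio_lt:
  fixes q :: real
  assumes "q > 1"
  shows "(\<Sum>i\<le>e. q ^ i)\<^sup>2 / q ^ (3 * e) < q\<^sup>2 / ((q - 1)\<^sup>2 * q ^ e)"
proof -
  have "(\<Sum>i\<le>e. q ^ i) * (q - 1) = q ^ Suc e - 1"
    using geometric_sum[of q "Suc e"] assms by (simp add: lessThan_Suc_atMost)
  then have "((\<Sum>i\<le>e. q ^ i) * (q - 1))\<^sup>2 * q ^ e < (q ^ Suc e)\<^sup>2 * q ^ e"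
    using assms one_le_power[of q "Suc e"]
    by (intro mult_strict_right_mono power_strict_mono) (auto simp: sum_nonneg)
  also have "\<dots> = q\<^sup>2 * q ^ (3 * e)"
    by (simp add: power_mult_distrib power_add[symmetric] power_mult[symmetric] algebra_simps)
  finally have "(\<Sum>i\<le>e. q ^ i)\<^sup>2 * ((q - 1)\<^sup>2 * q ^ e) < q\<^sup>2 * q ^ (3 * e)"
    by (simp only: power_mult_distrib mult_ac)
  then show ?thesis
    using assms by (simp add: field_simps)
qed

lemma geometric_sum_sq_ratio_lt_3_4:
  fixes q :: real
  assumes "q \<ge> 3" "e \<ge> 1"
  shows "(\<Sum>i\<le>e. q ^ i)\<^sup>2 / q ^ (3 * e) < 3 / 4"
proof -
  have "q ^ 1 \<le> q ^ e"
    using assms by (intro power_increasing) auto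
  then have "q\<^sup>2 / ((q - 1)\<^sup>2 * q ^ e) \<le> q\<^sup>2 / ((q - 1)\<^sup>2 * q)"
    using assms by (intro divide_left_mono mult_left_mono mult_pos_pos) auto
  also have "\<dots> = q / (q - 1)\<^sup>2"
    using assms by (simp add: power2_eq_square)
  also have "\<dots> \<le> 3 / 4"
  proof -
    have "0 \<le> (3 * q - 1) * (q - 3)"
      using assms by simp
    then have "4 * q \<le> 3 * (q - 1)\<^sup>2"
      by (simp add: power2_eq_square algebra_simps)
    moreover have "(q - 1)\<^sup>2 > 0"
      using assms by simp
    ultimately show ?thesis
      by (simp add: divide_le_eq)
  qed
  finally show ?thesis
    using geometric_sum_sq_ratio_lt[of q e] assms by linarith
qed

lemma geometric_sum_sq_ratio_lt_1:
  fixes q :: real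
  assumes "q \<ge> 2" "e \<ge> 2"
  shows "(\<Sum>i\<le>e. q ^ i)\<^sup>2 / q ^ (3 * e) < 1"
proof -
  have "q\<^sup>2 \<le> q ^ e"
    using assms by (intro power_increasing) auto
  then have "q\<^sup>2 / ((q - 1)\<^sup>2 * q ^ e) \<le> q\<^sup>2 / ((q - 1)\<^sup>2 * q\<^sup>2)"
    using assms by (intro divide_left_mono mult_left_mono mult_pos_pos) auto
  also have "\<dots> \<le> 1"
    using assms by simp
  finally show ?thesis
    using geometric_sum_sq_ratio_lt[of q e] assms by linarith
qed

lemma divisor_sum_sq_eq_prod_ratio:
  assumes a: "a > 0"
  shows "(real (divisor_sum a))\<^sup>2 =
           (\<Prod>q\<in>prime_factors a. (\<Sum>i\<le>multiplicity q a. real q ^ i)\<^sup>2 / real q ^ (3 * multiplicity q a))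
           * real a ^ 3"
proof -
  let ?P = "prime_factors a" and ?e = "\<lambda>q. multiplicity q a"
  define \<rho> where "\<rho> = (\<lambda>q. (\<Sum>i\<le>?e q. real q ^ i)\<^sup>2 / real q ^ (3 * ?e q))"
  have "(real (divisor_sum a))\<^sup>2 = (\<Prod>q\<in>?P. (\<Sum>i\<le>?e q. real q ^ i)\<^sup>2)"
    by (simp add: divisor_sum_eq_prod[OF a] prod_power_distrib)
  also have "\<dots> = (\<Prod>q\<in>?P. \<rho> q * real q ^ (3 * ?e q))"
    by (intro prod.cong) (auto dest: in_prime_factors_imp_prime simp: \<rho>_def prime_gt_0_nat)
  also have "\<dots> = (\<Prod>q\<in>?P. \<rho> q) * real a ^ 3"
    using arg_cong[OF prime_factorization_nat[OF a], of "\<lambda>x. real x ^ 3"]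
    by (simp add: prod.distrib power_mult[symmetric] mult.commute prod_power_distrib)
  finally show ?thesis
    unfolding \<rho>_def .
qed

lemma prod_geometric_sum_sq_ratio_lt_1:
  assumes "a \<ge> 3"
  shows "(\<Prod>q\<in>prime_factors a.
            (\<Sum>i\<le>multiplicity q a. real q ^ i)\<^sup>2 / real q ^ (3 * multiplicity q a)) < 1"
proof -
  let ?P = "prime_factors a"
  define e where "e q = multiplicity q a" for q
  define \<rho> where "\<rho> q = (\<Sum>i\<le>e q. real q ^ i)\<^sup>2 / real q ^ (3 * e q)" for q
  \<comment> \<open>only \<open>q^e = 2\<close> gives a factor \<open>\<rho> q > 1\<close> (namely \<open>9/8\<close>), and then \<open>a \<ge> 3\<close>
    supplies an odd prime with factor \<open>< 3/4\<close>\<close>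
  have a: "a > 0" using assms by simp
  have e: "e q \<ge> 1" if "q \<in> ?P" for q
    using that by (auto simp: e_def prime_factors_multiplicity)
  have q: "q \<ge> 2" "q \<noteq> 2 \<Longrightarrow> q \<ge> 3" if "q \<in> ?P" for q
    using that prime_ge_2_nat[OF in_prime_factors_imp_prime[OF that]] by auto
  have \<rho>_nonneg: "\<rho> q \<ge> 0" for q
    by (simp add: \<rho>_def)
  have \<rho>_odd: "\<rho> q < 3 / 4" if "q \<in> ?P" "q \<noteq> 2" for q
    unfolding \<rho>_def using that q e by (intro geometric_sum_sq_ratio_lt_3_4) auto
  have \<rho>_lt_1: "\<rho> q < 1" if "q \<in> ?P" "\<not> (q = 2 \<and> e q = 1)" for q
  proof (cases "q = 2")
    case True
    then have "e q \<ge> 2" using that e by fastforce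
    then show ?thesis
      unfolding \<rho>_def using q that by (intro geometric_sum_sq_ratio_lt_1) auto
  qed (use \<rho>_odd that in fastforce)
  have "(\<Prod>q\<in>?P. \<rho> q) < 1"
  proof (cases "2 \<in> ?P \<and> e 2 = 1")
    case True
    have "\<exists>q0\<in>?P. q0 \<noteq> 2"
    proof (rule ccontr)
      assume "\<not> ?thesis"
      then have "?P = {2}" using True by auto
      then have "a = 2"
        using prime_factorization_nat[OF a] True by (simp add: e_def)
      then show False using assms by simp
    qed
    then obtain q0 where q0: "q0 \<in> ?P" "q0 \<noteq> 2" by blast
    have "(\<Prod>q\<in>?P. \<rho> q) = \<rho> 2 * (\<Prod>q\<in>?P - {2}. \<rho> q)"
      by (rule prod.remove) (use True in auto)
    also have "(\<Prod>q\<in>?P - {2}. \<rho> q) = \<rho> q0 * (\<Prod>q\<in>?P - {2} - {q0}. \<rho> q)"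
      by (rule prod.remove) (use q0 in auto)
    also have "\<rho> 2 * (\<rho> q0 * (\<Prod>q\<in>?P - {2} - {q0}. \<rho> q)) \<le> \<rho> 2 * \<rho> q0"
      using \<rho>_nonneg \<rho>_lt_1 by (intro mult_left_mono mult_right_le_one_le prod_le_1 prod_nonneg)
        (auto intro: less_imp_le)
    also have "\<dots> < 1"
      using True \<rho>_odd[OF q0] by (simp add: \<rho>_def)
    finally show ?thesis .
  next
    case False
    obtain q0 where "q0 \<in> ?P"
      using prime_factors_nonempty[of a] assms by fastforce
    then have "(\<Prod>q\<in>?P. \<rho> q) < (\<Prod>q\<in>?P. 1)"
      using False \<rho>_nonneg \<rho>_lt_1 by (intro prod_mono_strict) (auto intro: less_imp_le)
    then show ?thesis by simp
  qed
  then show ?thesis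
    by (simp add: \<rho>_def e_def)
qed

lemma divisor_sum_sq_lt_cube:
  assumes "a \<ge> 3"
  shows "divisor_sum a ^ 2 < a ^ 3"
proof -
  have "(real (divisor_sum a))\<^sup>2 < 1 * real a ^ 3"
    using divisor_sum_sq_eq_prod_ratio[of a] prod_geometric_sum_sq_ratio_lt_1[OF assms] assms
    by (simp add: mult_strict_right_mono)
  then show ?thesis
    by (simp flip: of_nat_power)
qed

lemma divisor_sum_lt_sqrt:
  assumes "a \<ge> 3"
  shows "real (divisor_sum a) < real a * sqrt (real a)"
proof (rule power_less_imp_less_base)
  have "real (divisor_sum a) ^ 2 < real a ^ 3"
    using divisor_sum_sq_lt_cube[OF assms] by (simp flip: of_nat_power)
  also have "\<dots> = (real a * sqrt (real a)) ^ 2"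
    by (simp add: power_mult_distrib power2_eq_square power3_eq_cube)
  finally show "real (divisor_sum a) ^ 2 < (real a * sqrt (real a)) ^ 2" .
qed simp

section \<open>The divisor function and the Nicolas--Robin constant\<close>

lemma ln_eq_sum_multiplicity:
  assumes "m > 0"
  shows "ln (real m) = (\<Sum>q\<in>prime_factors m. real (multiplicity q m) * ln (real q))"
proof -
  have "ln (real m) = ln (\<Prod>q\<in>prime_factors m. real q ^ multiplicity q m)"
    using arg_cong[OF prime_factorization_nat[OF assms], of real] by simp
  also have "\<dots> = (\<Sum>q\<in>prime_factors m. ln (real q ^ multiplicity q m))"
    by (rule ln_prod) (auto dest: in_prime_factors_imp_prime simp: prime_gt_0_nat)
  finally show ?thesis
    by (simp add: ln_realpow)
qed

lemma ln_num_divisors_eq_sum: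
  "m > 0 \<Longrightarrow> ln (real (num_divisors m)) = (\<Sum>q\<in>prime_factors m. ln (real (multiplicity q m) + 1))"
  by (simp add: num_divisors_eq_prod ln_prod add.commute)

lemma sum_multiplicity_mult_ln_le:
  assumes "m > 0" "A \<subseteq> prime_factors m"
  shows "(\<Sum>q\<in>A. real (multiplicity q m) * ln (real q)) \<le> ln (real m)"
  unfolding ln_eq_sum_multiplicity[OF assms(1)]
  using assms(2) by (intro sum_mono2) (auto dest!: in_prime_factors_imp_prime prime_gt_0_nat)

lemma multiplicity_le_ln_div_ln_2:
  assumes "m > 0" "q \<in> prime_factors m"
  shows "real (multiplicity q m) \<le> ln (real m) / ln 2"
proof -
  have "real (multiplicity q m) * ln 2 \<le> real (multiplicity q m) * ln (real q)"
    using prime_ge_2_nat[OF in_prime_factors_imp_prime[OF assms(2)]]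
    by (intro mult_left_mono) auto
  also have "\<dots> \<le> ln (real m)"
    using sum_multiplicity_mult_ln_le[of m "{q}"] assms by simp
  finally show ?thesis
    by (simp add: field_simps)
qed

lemma ln_add_one_le_mult_ln_2: "ln (real n + 1) \<le> real n * ln 2"
proof -
  have "real n + 1 \<le> 2 ^ n"
    using less_exp[of n] by (metis Suc_leI of_nat_Suc of_nat_le_iff of_nat_numeral of_nat_power add.commute)
  then have "ln (real n + 1) \<le> ln (2 ^ n)"
    by simp
  then show ?thesis
    by (simp add: ln_realpow)
qed

text \<open>Each prime \<open>q \<le> y\<close> contributes at most \<open>log (log m / log 2 + 1)\<close>; for \<open>q > y\<close>,
  \<open>log (e + 1) \<le> e log 2 \<le> (log 2 / log y) e log q\<close>, and the \<open>e log q\<close> sum to at most \<open>log m\<close>.\<close>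
lemma ln_num_divisors_le_split:
  fixes m :: nat and y :: real
  assumes m: "m > 0" and y: "y > 1"
  shows "ln (real (num_divisors m))
           \<le> y * ln (ln (real m) / ln 2 + 1) + ln 2 / ln y * ln (real m)"
proof -
  let ?P = "prime_factors m" and ?L = "ln (real m)"
  define e where "e q = real (multiplicity q m)" for q
  define small where "small = {q\<in>?P. real q \<le> y}"
  define big where "big = {q\<in>?P. real q > y}"
  have "(\<Sum>q\<in>small. ln (e q + 1)) \<le> (\<Sum>q\<in>small. ln (?L / ln 2 + 1))"
  proof (rule sum_mono)
    fix q assume "q \<in> small"
    then have "e q \<le> ?L / ln 2"
      using multiplicity_le_ln_div_ln_2[OF m] by (simp add: small_def e_def)
    then show "ln (e q + 1) \<le> ln (?L / ln 2 + 1)"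
      by (simp add: e_def)
  qed
  also have "\<dots> \<le> y * ln (?L / ln 2 + 1)"
  proof -
    have "small \<subseteq> {1..nat \<lfloor>y\<rfloor>}"
    proof
      fix q assume "q \<in> small"
      then have "prime q" "real q \<le> y"
        by (auto simp: small_def)
      then show "q \<in> {1..nat \<lfloor>y\<rfloor>}"
        using prime_ge_1_nat[of q] by (auto simp: le_nat_iff le_floor_iff)
    qed
    then have "card small \<le> nat \<lfloor>y\<rfloor>"
      using card_mono[of "{1..nat \<lfloor>y\<rfloor>}" small] by simp
    then have "real (card small) \<le> y"
      using y by linarith
    then show ?thesis
      using m by (simp add: mult_right_mono)
  qed
  finally have small_bound: "(\<Sum>q\<in>small. ln (e q + 1)) \<le> y * ln (?L / ln 2 + 1)" .
  have "(\<Sum>q\<in>big. ln (e q + 1)) \<le> (\<Sum>q\<in>big. ln 2 / ln y * (e q * ln (real q)))"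
  proof (rule sum_mono)
    fix q assume "q \<in> big"
    then have "ln 2 \<le> ln 2 / ln y * ln (real q)"
      using y by (simp add: big_def field_simps)
    then have "e q * ln 2 \<le> e q * (ln 2 / ln y * ln (real q))"
      by (rule mult_left_mono) (simp add: e_def)
    then show "ln (e q + 1) \<le> ln 2 / ln y * (e q * ln (real q))"
      using ln_add_one_le_mult_ln_2[of "multiplicity q m"] by (simp add: e_def algebra_simps)
  qed
  also have "\<dots> = ln 2 / ln y * (\<Sum>q\<in>big. e q * ln (real q))"
    by (simp add: sum_distrib_left)
  also have "\<dots> \<le> ln 2 / ln y * ?L"
    using sum_multiplicity_mult_ln_le[OF m, of big] y
    by (intro mult_left_mono) (auto simp: big_def e_def)
  finally have big_bound: "(\<Sum>q\<in>big. ln (e q + 1)) \<le> ln 2 / ln y * ?L" .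
  have "ln (real (num_divisors m)) = (\<Sum>q\<in>small. ln (e q + 1)) + (\<Sum>q\<in>big. ln (e q + 1))"
    unfolding ln_num_divisors_eq_sum[OF m] e_def small_def big_def
    by (subst sum.union_disjoint[symmetric]) (auto intro!: sum.cong)
  then show ?thesis
    using small_bound big_bound by linarith
qed

lemma sqrt_mult_ln_sq_le:
  fixes x c :: real
  assumes x: "x \<ge> 1" and c: "c \<ge> 0"
  shows "sqrt x * (ln x + c) * ln x \<le> (16 + 4 * c) * x"
proof -
  define w where "w = sqrt (sqrt x)"
  have w: "w \<ge> 1" and sqrt_eq: "sqrt x = w\<^sup>2"
    using x by (auto simp: w_def)
  have "x = (sqrt x)\<^sup>2"
    using x by simp
  then have x_eq: "x = w ^ 4"
    by (simp add: sqrt_eq flip: power_mult)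
  have "ln x = 4 * ln w"
    using w by (simp add: x_eq ln_realpow)
  also have "\<dots> \<le> 4 * w"
    using ln_le_minus_one[of w] w by simp
  finally have ln_le: "ln x \<le> 4 * w" .
  have "sqrt x * (ln x + c) * ln x \<le> w\<^sup>2 * (4 * w + c) * (4 * w)"
    unfolding sqrt_eq using ln_le x w c by (intro mult_mono) auto
  also have "\<dots> = 16 * w ^ 4 + 4 * c * w ^ 3"
    by (simp add: algebra_simps power2_eq_square power3_eq_cube power4_eq_xxxx)
  also have "\<dots> \<le> 16 * w ^ 4 + 4 * c * w ^ 4"
    using w c by (intro add_left_mono mult_left_mono power_increasing) auto
  finally show ?thesis
    by (simp add: x_eq algebra_simps)
qed

lemma ln_num_divisors_le_sqrt_ln:
  fixes m :: nat
  assumes L1: "ln (real m) > 1"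
  defines "L \<equiv> ln (real m)" and "c \<equiv> ln (1 / ln 2 + 1)"
  shows "ln (real (num_divisors m)) \<le> sqrt L * (ln L + c) + 2 * ln 2 / ln L * L"
proof -
  have m: "m > 0"
    using L1 by (cases m) auto
  have "ln (L / ln 2 + 1) \<le> ln (L * (1 / ln 2 + 1))"
    using L1 by (subst ln_le_cancel_iff) (auto simp: L_def algebra_simps add_pos_pos)
  also have "\<dots> = ln L + c"
  proof -
    have "1 / ln 2 + 1 > (0::real)"
      by (simp add: add_pos_pos)
    then show ?thesis
      using L1 by (simp add: L_def c_def ln_mult)
  qed
  finally have "sqrt L * ln (L / ln 2 + 1) \<le> sqrt L * (ln L + c)"
    using L1 by (intro mult_left_mono) (auto simp: L_def)
  moreover have "ln 2 / ln (sqrt L) * L = 2 * ln 2 / ln L * L"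
    using L1 by (simp add: L_def ln_sqrt)
  moreover have "1 < sqrt L"
    using L1 by (simp add: L_def)
  ultimately show ?thesis
    using ln_num_divisors_le_split[OF m, of "sqrt L", folded L_def] by linarith
qed

lemma divisor_quotient_le:
  fixes m :: nat
  assumes m: "m \<ge> 3"
  defines "c \<equiv> ln (1 / ln 2 + 1)"
  shows "(ln (real (num_divisors m)) / ln 2) * ln (ln (real m)) / ln (real m)
           \<le> 2 + (16 + 4 * c) / ln 2"
proof -
  define L where "L = ln (real m)"
  have L: "L > 0" using m by (simp add: L_def)
  have c: "c \<ge> 0" by (simp add: c_def)
  have ln_d: "ln (real (num_divisors m)) \<ge> 0"
    using num_divisors_eq_prod[of m] m by (simp add: prod_ge_1)
  show ?thesis
  proof (cases "L > 1")
    case False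
    then have "(ln (real (num_divisors m)) / ln 2) * ln L / L \<le> 0"
      using ln_d L by (simp add: mult_nonneg_nonpos divide_nonpos_pos)
    moreover have "0 \<le> (16 + 4 * c) / ln 2"
      using c by simp
    ultimately show ?thesis
      by (simp add: L_def)
  next
    case True
    then have "ln (real (num_divisors m)) * ln L / (ln 2 * L)
                 \<le> (sqrt L * (ln L + c) * ln L) / (ln 2 * L) + 2"
      using ln_num_divisors_le_sqrt_ln[of m] L by (simp add: L_def c_def field_simps)
    also have "\<dots> \<le> ((16 + 4 * c) * L) / (ln 2 * L) + 2"
      using sqrt_mult_ln_sq_le[of L c] True c
      by (intro add_right_mono divide_right_mono) auto
    finally show ?thesis
      using L by (simp add: L_def)
  qed
qed

lemma num_divisors_le_powr_C1:
  fixes a :: nat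
  assumes a: "a \<ge> 3"
  shows "real (num_divisors a) \<le> real a powr (C1 * ln 2 / ln (ln (real a)))"
proof -
  \<comment> \<open>\<open>C1\<close> is a \<open>Sup\<close>, which only bounds the quotients if they are bounded above\<close>
  have "bdd_above {(ln (real (num_divisors m)) / ln 2) * ln (ln (real m)) / ln (real m) | m. m \<ge> 3}"
    using divisor_quotient_le by (intro bdd_aboveI) blast
  then have quotient: "(ln (real (num_divisors a)) / ln 2) * ln (ln (real a)) / ln (real a) \<le> C1"
    unfolding C1_def using a by (intro cSup_upper) auto
  have "ln (real a) \<ge> ln 3"
    using a by simp
  then have "ln (real a) > 1"
    using ln3_gt_1 by linarith
  then have "ln (ln (real a)) > 0" by simp
  then have "ln (real (num_divisors a)) \<le> C1 * ln 2 / ln (ln (real a)) * ln (real a)"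
    using quotient \<open>ln (real a) > 1\<close> by (simp add: field_simps)
  moreover have "num_divisors a > 0"
    using num_divisors_eq_prod[of a] a by simp
  ultimately have "real (num_divisors a) \<le> exp (C1 * ln 2 / ln (ln (real a)) * ln (real a))"
    by (metis exp_ln exp_le_cancel_iff of_nat_0_less_iff)
  then show ?thesis
    using a by (simp add: powr_def)
qed

section \<open>Multiplicatively \<open>e\<close>-perfect numbers\<close>

lemma divisor_sum_mult_num_divisors_power_lt:
  fixes a j :: nat
  assumes a: "a \<ge> 3"
  shows "real (divisor_sum a) * real (num_divisors a) ^ j
           < real a * real a powr (0.5 + C1 * ln 2 * real j / ln (ln (real a)))"
proof -
  have "real (num_divisors a) ^ j \<le> (real a powr (C1 * ln 2 / ln (ln (real a)))) ^ j"
    using num_divisors_le_powr_C1[OF a] by (intro power_mono) auto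
  also have "\<dots> = real a powr (C1 * ln 2 * real j / ln (ln (real a)))"
    using a by (simp add: powr_power mult_ac)
  finally have "real (divisor_sum a) * real (num_divisors a) ^ j
                  < (real a * sqrt (real a)) * real a powr (C1 * ln 2 * real j / ln (ln (real a)))"
    using divisor_sum_lt_sqrt[OF a] num_divisors_ge_2[of a] a
    by (intro mult_less_le_imp_less) auto
  also have "\<dots> = real a * real a powr (0.5 + C1 * ln 2 * real j / ln (ln (real a)))"
    using a by (simp add: powr_add powr_half_sqrt)
  finally show ?thesis .
qed

lemma prod_prod_remove_eq_power:
  fixes f :: "'a \<Rightarrow> 'b::comm_semiring_1"
  assumes "finite A"
  shows "(\<Prod>x\<in>A. \<Prod>y\<in>A - {x}. f y) = (\<Prod>y\<in>A. f y) ^ (card A - 1)"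
proof -
  have "(\<Prod>x\<in>A. \<Prod>y\<in>A - {x}. f y) = (\<Prod>y\<in>A. \<Prod>x\<in>{x\<in>A. y \<noteq> x}. f y)"
    using prod.swap_restrict[OF assms assms, of "\<lambda>x y. f y" "\<lambda>x y. y \<noteq> x"]
    by (simp add: set_diff_eq)
  also have "\<dots> = (\<Prod>y\<in>A. f y ^ (card A - 1))"
  proof (rule prod.cong)
    fix y assume "y \<in> A"
    then have "card {x\<in>A. y \<noteq> x} = card A - 1"
      using assms card_Diff_singleton[of y A] by (simp add: set_diff_eq eq_commute[of y])
    then show "(\<Prod>x\<in>{x\<in>A. y \<noteq> x}. f y) = f y ^ (card A - 1)"
      by simp
  qed simp
  finally show ?thesis
    by (simp add: prod_power_distrib)
qed

lemma e_perfect_exponent_eq: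
  assumes n: "n > 0" and perfect: "T_e n = n ^ k" and p: "p \<in> prime_factors n"
  shows "k * multiplicity p n = divisor_sum (multiplicity p n) *
           (\<Prod>q\<in>prime_factors n - {p}. num_divisors (multiplicity q n))"
proof -
  have "k * multiplicity p n = multiplicity p (n ^ k)"
    using p n by (subst prime_elem_multiplicity_power_distrib) (auto intro: prime_imp_prime_elem)
  then show ?thesis
    using multiplicity_T_e[OF n p] perfect by simp
qed

lemma e_perfect_lower_bound:
  assumes n: "n > 1" and exponents: "\<forall>p\<in>prime_factors n. multiplicity p n \<ge> 2"
    and perfect: "T_e n = n ^ k"
  shows "2 ^ (card (prime_factors n) - 1) < k"
proof -
  let ?P = "prime_factors n" and ?a = "\<lambda>q. multiplicity q n"
  obtain p where p: "p \<in> ?P"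
    using prime_factors_nonempty[OF n] by blast
  have "(2::nat) ^ (card ?P - 1) = (\<Prod>q\<in>?P - {p}. 2)"
    using p by (simp add: card_Diff_singleton)
  also have "\<dots> \<le> (\<Prod>q\<in>?P - {p}. num_divisors (?a q))"
    using exponents num_divisors_ge_2 by (intro prod_mono) auto
  finally have "?a p * 2 ^ (card ?P - 1) < divisor_sum (?a p) * (\<Prod>q\<in>?P - {p}. num_divisors (?a q))"
    using divisor_sum_ge[of "?a p"] exponents p
    by (intro mult_less_le_imp_less) auto
  also have "\<dots> = ?a p * k"
    using e_perfect_exponent_eq[OF _ perfect p] n by (simp add: mult.commute)
  finally show ?thesis
    by simp
qed

lemma e_perfect_prod_identity:
  assumes n: "n > 0" and perfect: "T_e n = n ^ k"
  shows "k ^ card (prime_factors n) * (\<Prod>p\<in>prime_factors n. multiplicity p n) =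
           (\<Prod>p\<in>prime_factors n. divisor_sum (multiplicity p n) *
              num_divisors (multiplicity p n) ^ (card (prime_factors n) - 1))"
proof -
  let ?P = "prime_factors n" and ?a = "\<lambda>q. multiplicity q n"
  have "k ^ card ?P * (\<Prod>p\<in>?P. ?a p) = (\<Prod>p\<in>?P. k * ?a p)"
    by (simp add: prod.distrib)
  also have "\<dots> = (\<Prod>p\<in>?P. divisor_sum (?a p) * (\<Prod>q\<in>?P - {p}. num_divisors (?a q)))"
    using e_perfect_exponent_eq[OF n perfect] by (intro prod.cong) auto
  also have "\<dots> = (\<Prod>p\<in>?P. divisor_sum (?a p)) * (\<Prod>p\<in>?P. num_divisors (?a p)) ^ (card ?P - 1)"
    by (simp add: prod.distrib prod_prod_remove_eq_power)
  finally show ?thesis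
    by (simp add: prod.distrib prod_power_distrib)
qed

lemma e_perfect_upper_bound:
  assumes n: "n > 1" and exponents: "\<forall>p\<in>prime_factors n. multiplicity p n \<ge> 3"
    and perfect: "T_e n = n ^ k"
  shows "real k < (\<Prod>p\<in>prime_factors n.
              real (multiplicity p n) powr
                (0.5 + (C1 * ln 2) * (real (card (prime_factors n)) - 1)
                        / ln (ln (real (multiplicity p n)))))
            powr (1 / real (card (prime_factors n)))"
proof -
  let ?P = "prime_factors n" and ?a = "\<lambda>q. real (multiplicity q n)"
  define r where "r = card ?P"
  define X where "X = (\<Prod>p\<in>?P. ?a p powr (0.5 + C1 * ln 2 * (real r - 1) / ln (ln (?a p))))"
  have r: "r \<ge> 1"
    using prime_factors_nonempty[OF n] by (simp add: r_def Suc_le_eq card_gt_0_iff)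
  have a_pos: "(\<Prod>p\<in>?P. ?a p) > 0"
    using exponents by (intro prod_pos) fastforce
  have "real k ^ r * (\<Prod>p\<in>?P. ?a p) =
          (\<Prod>p\<in>?P. real (divisor_sum (multiplicity p n)) *
             real (num_divisors (multiplicity p n)) ^ (r - 1))"
    using arg_cong[OF e_perfect_prod_identity[OF _ perfect], of real] n by (simp add: r_def)
  also have "\<dots> < (\<Prod>p\<in>?P. ?a p * ?a p powr (0.5 + C1 * ln 2 * real (r - 1) / ln (ln (?a p))))"
  proof -
    obtain p0 where "p0 \<in> ?P"
      using prime_factors_nonempty[OF n] by blast
    moreover have "real (divisor_sum (multiplicity p n)) * real (num_divisors (multiplicity p n)) ^ (r - 1)
        < ?a p * ?a p powr (0.5 + C1 * ln 2 * real (r - 1) / ln (ln (?a p)))" if "p \<in> ?P" for p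
      using divisor_sum_mult_num_divisors_power_lt exponents that by simp
    moreover have "?a p > 0" if "p \<in> ?P" for p
      using exponents that by fastforce
    ultimately show ?thesis
      by (intro prod_mono_strict) (auto intro: less_imp_le)
  qed
  also have "\<dots> = (\<Prod>p\<in>?P. ?a p) * X"
    using r by (simp add: X_def prod.distrib of_nat_diff)
  finally have "real k ^ r < X"
    using a_pos by (simp add: mult.commute)
  then have "(real k ^ r) powr (1 / real r) < X powr (1 / real r)"
    using r by (intro powr_less_mono2) auto
  moreover have "(real k ^ r) powr (1 / real r) = real k"
    using r by (simp add: powr_realpow'[of "real k" r, symmetric] powr_powr)
  ultimately show ?thesis
    by (simp add: X_def r_def)
qed

theorem mainTheorem5:
  fixes n k :: nat
  assumes "n > 1"
    and "\<forall>p\<in>prime_factors n. multiplicity p n \<ge> 3"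
    and "k \<ge> 2"
    and "T_e n = n ^ k"
  shows "(2::nat) ^ (card (prime_factors n) - 1) < k \<and>
         real k < (\<Prod>p\<in>prime_factors n.
              real (multiplicity p n) powr
                (0.5 + (C1 * ln 2) * (real (card (prime_factors n)) - 1)
                        / ln (ln (real (multiplicity p n)))))
            powr (1 / real (card (prime_factors n)))"
proof -
  have "\<forall>p\<in>prime_factors n. multiplicity p n \<ge> 2"
    using assms(2) by fastforce
  then show ?thesis
    using e_perfect_lower_bound[OF assms(1) _ assms(4)] e_perfect_upper_bound[OF assms(1,2,4)]
    by blast
qed

end
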